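(* Let $M$ be a module over a ring $R$ and $r\in R$. Then $\sigma_r=\delta_S$ for some $S\subseteq M$ if and only if $r$ is a multiplicative identity for $M$, i.e. $ru=u$ for all $u\in M$.
   Context: $\sigma_r:\mathcal{P}(M)\to\mathcal{P}(M)$ is $\sigma_r(X)=\{ru: u\in X\}$. For $S\subseteq M$, the dilation is $\delta_S(X)=X\oplus S=\{x+s : x\in X, s\in S\}$. *)

theory Defs
  imports Main
begin

text \<open>A (unital, left) module over a ring R (type class ring_1, not necessarily
commutative): the carrier M is the whole abelian group type 'm, and the
scalar action is the function scale.\<close>

locale left_module =
  fixes scale :: "'r::ring_1 \<Rightarrow> 'm::ab_group_add \<Rightarrow> 'm"
  assumes scale_right_distrib: "scale a (x + y) = scale a x + scale a y"
    and scale_left_distrib: "scale (a + b) x = scale a x + scale b x"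
    and scale_scale: "scale a (scale b x) = scale (a * b) x"
    and scale_one: "scale 1 x = x"

definition sigma_map :: "('r \<Rightarrow> 'm \<Rightarrow> 'm) \<Rightarrow> 'r \<Rightarrow> 'm set \<Rightarrow> 'm set" where
  "sigma_map scale r X = {scale r u | u. u \<in> X}"

definition dilation :: "'m::plus set \<Rightarrow> 'm set \<Rightarrow> 'm set" where
  "dilation S X = {x + s | x s. x \<in> X \<and> s \<in> S}"

end

theory Submission
  imports Defs
begin

text \<open>Testing both maps on singletons suffices: \<open>\<sigma>\<^sub>r {0} = {0}\<close> while \<open>\<delta>\<^sub>S {0} = S\<close>, so
  \<open>S = {0}\<close> and \<open>\<delta>\<^sub>S\<close> is the identity; then \<open>\<sigma>\<^sub>r {u} = {r u}\<close> forces \<open>r u = u\<close>.\<close>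

lemma dilation_apply_zero: "dilation S {0 :: 'm::monoid_add} = S"
  by (auto simp: dilation_def)

lemma dilation_zero: "dilation {0 :: 'm::monoid_add} X = X"
  by (auto simp: dilation_def)

lemma sigma_map_singleton: "sigma_map scale r {u} = {scale r u}"
  by (auto simp: sigma_map_def)

lemma (in left_module) scale_zero_right: "scale r 0 = 0"
  using scale_right_distrib [of r 0 0] by simp

lemma (in left_module) sigma_map_eq_dilation_imp_zero:
  assumes "sigma_map scale r = dilation S"
  shows "S = {0}"
proof -
  have "S = sigma_map scale r {0}"
    using assms by (simp add: dilation_apply_zero)
  also have "\<dots> = {0}"
    by (simp add: sigma_map_singleton scale_zero_right)
  finally show ?thesis .
qed

theorem mainTheorem14:
  fixes scale :: "'r::ring_1 \<Rightarrow> 'm::ab_group_add \<Rightarrow> 'm" and r :: 'r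
  assumes "left_module scale"
  shows "(\<exists>S :: 'm set. sigma_map scale r = dilation S) \<longleftrightarrow> (\<forall>u. scale r u = u)"
proof
  assume "\<exists>S :: 'm set. sigma_map scale r = dilation S"
  then obtain S where "sigma_map scale r = dilation S" by blast
  then have "sigma_map scale r = dilation {0}"
    using left_module.sigma_map_eq_dilation_imp_zero [OF assms] by blast
  then have "{scale r u} = {u}" for u
    by (metis sigma_map_singleton dilation_zero)
  then show "\<forall>u. scale r u = u" by blast
next
  assume "\<forall>u. scale r u = u"
  then have "sigma_map scale r = dilation {0}"
    by (auto simp: sigma_map_def dilation_zero)
  then show "\<exists>S :: 'm set. sigma_map scale r = dilation S" by blast
qed

end
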